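(* Let $T$ be a non-abelian finite simple group and let $G$ be a finite group with a normal series $1\unlhd N\unlhd M\unlhd G$ where $N$ and $G/M$ are solvable and $M/N\cong T$. Then a perfect central extension $E$ of $T$ is a section of $G$ if and only if $E$ is a section of $M$.
   Context: A perfect central extension of $T$ is a perfect group $E$ with $E/Z(E)\cong T$. A section of a group is a quotient of a subgroup. *)

theory Defs
  imports "HOL-Algebra.Algebra"
begin

definition group_center :: "('a, 'b) monoid_scheme \<Rightarrow> 'a set" where
  "group_center E = {z \<in> carrier E. \<forall>x \<in> carrier E. z \<otimes>\<^bsub>E\<^esub> x = x \<otimes>\<^bsub>E\<^esub> z}"

definition perfect_group :: "('a, 'b) monoid_scheme \<Rightarrow> bool" where
  "perfect_group E \<longleftrightarrow> group E \<and> derived E (carrier E) = carrier E"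

definition perfect_central_extension :: "('a, 'b) monoid_scheme \<Rightarrow> ('c, 'd) monoid_scheme \<Rightarrow> bool" where
  "perfect_central_extension E T \<longleftrightarrow> perfect_group E \<and> (E Mod (group_center E)) \<cong> T"

definition is_section :: "('c, 'd) monoid_scheme \<Rightarrow> ('a, 'b) monoid_scheme \<Rightarrow> bool" where
  "is_section E G \<longleftrightarrow> (\<exists>H K. subgroup H G \<and> K \<lhd> (G\<lparr>carrier := H\<rparr>)
       \<and> ((G\<lparr>carrier := H\<rparr>) Mod K) \<cong> E)"

end

theory Submission
  imports Defs
begin

text \<open>Solvability of G/M
  puts some derived subgroup G^(n) inside M. If E is a homomorphic image f(H) of a subgroup H
  of G, then, E being perfect, f(H^(n)) = E^(n) = E, while H^(n) \<subseteq> G^(n) \<subseteq> M; so E is already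
  a section of M. Conversely, subgroups of M are subgroups of G.\<close>

lemma (in group) exp_of_derived_subset:
  assumes "subgroup H G"
  shows "(derived G ^^ n) H \<subseteq> H"
  by (induction n) (use derived_incl[OF _ assms] in auto)

lemma (in group) exp_of_derived_consistent:
  assumes "subgroup H G"
  shows "(derived (G\<lparr>carrier := H\<rparr>) ^^ n) H = (derived G ^^ n) H"
  by (induction n) (use derived_consistent[OF _ assms] exp_of_derived_subset[OF assms] in auto)

lemma perfect_group_exp_of_derived:
  assumes "perfect_group E"
  shows "(derived E ^^ n) (carrier E) = carrier E"
  using assms unfolding perfect_group_def by (induction n) auto

lemma (in group_hom) perfect_img_exp_of_derived:
  assumes "perfect_group H" and "h ` carrier G = carrier H"
  shows "h ` (derived G ^^ n) (carrier G) = carrier H"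
  using exp_of_derived_img[of "carrier G" n] perfect_group_exp_of_derived[OF assms(1)] assms(2)
  by simp

lemma (in normal) exp_of_derived_subset_of_solvable_quotient:
  assumes "solvable (G Mod H)"
  obtains n where "(derived G ^^ n) (carrier G) \<subseteq> H"
proof -
  interpret quotient: group_hom G "G Mod H" "\<lambda>a. H #> a"
    by (simp add: group_hom_def group_hom_axioms_def r_coset_hom_Mod factorgroup_is_group
        is_group)
  obtain n where trivial: "(derived (G Mod H) ^^ n) (carrier (G Mod H)) = {H}"
    using group.solvable_iff_trivial_derived_seq[OF factorgroup_is_group] assms
    by (auto simp: FactGroup_def)
  have "(\<lambda>a. H #> a) ` carrier G = carrier (G Mod H)"
    by (auto simp: FactGroup_def RCOSETS_def)
  then have cosets: "(\<lambda>a. H #> a) ` (derived G ^^ n) (carrier G) = {H}"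
    using quotient.exp_of_derived_img[of "carrier G" n] trivial by simp
  show thesis
  proof (intro that subsetI)
    fix x assume x: "x \<in> (derived G ^^ n) (carrier G)"
    then have "x \<in> carrier G"
      using exp_of_derived_in_carrier[of "carrier G" n] by blast
    moreover have "H #> x = H"
      using cosets x by blast
    ultimately show "x \<in> H"
      using coset_join1[OF _ _ subgroup_axioms] by blast
  qed
qed

lemma is_section_iff_epimorphic_image:
  assumes "group G" and "group E"
  shows "is_section E G \<longleftrightarrow>
    (\<exists>H f. subgroup H G \<and> group_hom (G\<lparr>carrier := H\<rparr>) E f \<and> f ` H = carrier E)"
proof
  assume "is_section E G"
  then obtain H K \<phi> where H: "subgroup H G" and K: "K \<lhd> G\<lparr>carrier := H\<rparr>"
    and \<phi>: "\<phi> \<in> iso (G\<lparr>carrier := H\<rparr> Mod K) E"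
    unfolding is_section_def is_iso_def by blast
  interpret K: normal K "G\<lparr>carrier := H\<rparr>" by fact
  define f where "f = \<phi> \<circ> (\<lambda>a. K #>\<^bsub>G\<lparr>carrier := H\<rparr>\<^esub> a)"
  have "f \<in> hom (G\<lparr>carrier := H\<rparr>) E"
    using hom_compose[OF K.r_coset_hom_Mod, of \<phi> E] \<phi> unfolding f_def iso_def by blast
  then have "group_hom (G\<lparr>carrier := H\<rparr>) E f"
    by (simp add: group_hom_def group_hom_axioms_def K.is_group assms(2))
  moreover have "f ` H = carrier E"
  proof -
    have "f ` H = \<phi> ` (\<lambda>a. K #>\<^bsub>G\<lparr>carrier := H\<rparr>\<^esub> a) ` H"
      unfolding f_def by (rule image_comp[symmetric])
    also have "\<dots> = \<phi> ` carrier (G\<lparr>carrier := H\<rparr> Mod K)"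
      by (auto simp: FactGroup_def RCOSETS_def)
    also have "\<dots> = carrier E"
      using \<phi> by (simp add: iso_def bij_betw_def)
    finally show ?thesis .
  qed
  ultimately show "\<exists>H f. subgroup H G \<and> group_hom (G\<lparr>carrier := H\<rparr>) E f \<and> f ` H = carrier E"
    using H by blast
next
  assume "\<exists>H f. subgroup H G \<and> group_hom (G\<lparr>carrier := H\<rparr>) E f \<and> f ` H = carrier E"
  then obtain H f where H: "subgroup H G" and f: "group_hom (G\<lparr>carrier := H\<rparr>) E f"
    and onto: "f ` H = carrier E"
    by blast
  have "kernel (G\<lparr>carrier := H\<rparr>) E f \<lhd> G\<lparr>carrier := H\<rparr>"
    by (rule group_hom.normal_kernel[OF f])
  moreover have "G\<lparr>carrier := H\<rparr> Mod kernel (G\<lparr>carrier := H\<rparr>) E f \<cong> E"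
    using group_hom.FactGroup_iso[OF f] onto by simp
  ultimately show "is_section E G"
    unfolding is_section_def using H by blast
qed

lemma is_section_of_subgroup:
  assumes "group G" and "subgroup M G" and "is_section E (G\<lparr>carrier := M\<rparr>)"
  shows "is_section E G"
proof -
  obtain H K where H: "subgroup H (G\<lparr>carrier := M\<rparr>)"
    and "K \<lhd> G\<lparr>carrier := H\<rparr>" and "G\<lparr>carrier := H\<rparr> Mod K \<cong> E"
    using assms(3) unfolding is_section_def by auto
  moreover have "subgroup H G"
    using group.incl_subgroup[OF assms(1,2) H] .
  ultimately show ?thesis
    unfolding is_section_def by blast
qed

lemma perfect_section_of_solvable_quotient:
  assumes "group G" and "M \<lhd> G" and "solvable (G Mod M)"
    and "perfect_group E" and "is_section E G"
  shows "is_section E (G\<lparr>carrier := M\<rparr>)"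
proof -
  interpret G: group G by fact
  interpret M: normal M G by fact
  have E: "group E" using assms(4) unfolding perfect_group_def by blast
  obtain H f where H: "subgroup H G" and f: "group_hom (G\<lparr>carrier := H\<rparr>) E f"
    and onto: "f ` H = carrier E"
    using assms(5) is_section_iff_epimorphic_image[OF assms(1) E] by blast
  obtain n where G_n: "(derived G ^^ n) (carrier G) \<subseteq> M"
    using M.exp_of_derived_subset_of_solvable_quotient[OF assms(3)] .
  define D where "D = (derived G ^^ n) H"
  have D_sub_M: "D \<subseteq> M"
    unfolding D_def using G.mono_exp_of_derived[OF subgroup.subset[OF H]] G_n by blast
  have D: "subgroup D G"
    unfolding D_def using G.exp_of_derived_is_subgroup[OF H] .
  have "subgroup D (G\<lparr>carrier := H\<rparr>)"
    using G.subgroup_incl[OF D H] G.exp_of_derived_subset[OF H] unfolding D_def by blast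
  then have f_D: "group_hom (G\<lparr>carrier := D\<rparr>) E f"
    using group_hom.induced_group_hom'[OF f] by simp
  have "f ` D = carrier E"
    using group_hom.perfect_img_exp_of_derived[OF f assms(4)] onto
      G.exp_of_derived_consistent[OF H]
    unfolding D_def by simp
  then show ?thesis
    using is_section_iff_epimorphic_image[OF G.subgroup_imp_group[OF M.subgroup_axioms] E]
      G.subgroup_incl[OF D M.subgroup_axioms D_sub_M] f_D
    by auto
qed

theorem lemma1p20:
  fixes T :: "('t, 'u) monoid_scheme" and G :: "('a, 'b) monoid_scheme"
    and E :: "('e, 'f) monoid_scheme" and N M :: "'a set"
  assumes "simple_group T" and "finite (carrier T)" and "\<not> comm_group T"
    and "group G" and "finite (carrier G)"
    and "subgroup N G" and "subgroup M G"
    and "N \<lhd> (G\<lparr>carrier := M\<rparr>)" and "M \<lhd> G"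
    and "solvable (G\<lparr>carrier := N\<rparr>)" and "solvable (G Mod M)"
    and "((G\<lparr>carrier := M\<rparr>) Mod N) \<cong> T"
    and "perfect_central_extension E T"
  shows "is_section E G \<longleftrightarrow> is_section E (G\<lparr>carrier := M\<rparr>)"
proof
  have "perfect_group E"
    using assms(13) unfolding perfect_central_extension_def by blast
  then show "is_section E G \<Longrightarrow> is_section E (G\<lparr>carrier := M\<rparr>)"
    using perfect_section_of_solvable_quotient[OF assms(4,9,11)] by blast
  show "is_section E (G\<lparr>carrier := M\<rparr>) \<Longrightarrow> is_section E G"
    using is_section_of_subgroup[OF assms(4,7)] .
qed

end
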